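(* Let $A\subset\mathbb{R}$ be compact. For $m\in\mathbb{N}$ let $$A_{m,0}=P_{0}\circ P_{-1/2^m}\circ P_{-2/2^m}\circ\cdots\circ P_{(-2^{2m}+1)/2^m}\circ P_{-2^{2m}/2^m}\,A ,$$ i.e. the successive polarizations $P_{k/2^m}$ for $k=-2^{2m},-2^{2m}+1,\dots,0$ applied to $A$ in increasing order of $k$. Then $\|1_{A_{m,0}}-1_{S(A)}\|_{L^1(\mathbb{R})}\to0$ as $m\to\infty$, where $S(A)=[-r_A,r_A]\cup(A\cap[0,\infty))$ and $r_A\ge0$ is chosen so that $\mathcal H^1(S(A))=\mathcal H^1(A)$.
   Context: For $a\in\mathbb{R}$, $P_a$ denotes polarization in $\mathbb{R}$ with respect to the point $a$ and the usual orientation: writing $A'=2a-A$ for the reflection of $A$ in $a$, $P_aA=\big((A\cup A')\cap[a,\infty)\big)\cup\big((A\cap A')\cap(-\infty,a]\big)$. The set $S(A)$ is the image of $A$ under the Solynin set map with respect to $\{0\}$. *)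

theory Defs
  imports "HOL-Analysis.Analysis"
begin

definition reflect_pt :: "real \<Rightarrow> real set \<Rightarrow> real set" where
  "reflect_pt a A = (\<lambda>x. 2 * a - x) ` A"

definition polarize :: "real \<Rightarrow> real set \<Rightarrow> real set" where
  "polarize a A = ((A \<union> reflect_pt a A) \<inter> {a..}) \<union> ((A \<inter> reflect_pt a A) \<inter> {..a})"

text \<open>The radius r_A >= 0 with H^1([-r,r] \<union> (A \<inter> [0,oo))) = H^1(A);
  on the real line H^1 is Lebesgue measure.\<close>
definition solynin_radius :: "real set \<Rightarrow> real" where
  "solynin_radius A = (SOME r. r \<ge> 0 \<and>
      measure lebesgue ({-r..r} \<union> (A \<inter> {0..})) = measure lebesgue A)"

definition solynin :: "real set \<Rightarrow> real set" where
  "solynin A = {- solynin_radius A .. solynin_radius A} \<union> (A \<inter> {0..})"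

definition A_m0 :: "nat \<Rightarrow> real set \<Rightarrow> real set" where
  "A_m0 m A = fold (\<lambda>k B. polarize (real_of_int k / 2 ^ m) B) [- (2 ^ (2 * m)) .. 0] A"

end

theory Submission
  imports Defs
begin

(* Polarizations preserve Lebesgue measure and do not increase the L1 distance of indicator
   functions, and the Solynin map S is 3-Lipschitz for that distance. Hence A may be replaced by
   the union C of the aligned pairs of dyadic cells of side d = 2^-m that meet A, which converges
   to A in measure. Up to a null set, polarizing a union of cells in a grid point k d polarizes its
   set of cell indices. As k sweeps from -2^(2m) (left of C) up to 0, everything left of the sweep
   point is gathered into one block of cells centered at it, so C ends up as an interval centered
   within d of 0 followed by the part of C to its right, which is within 4 d of S(C). *)

section \<open>The L1 distance of indicator functions\<close>

definition indicator_dist :: "real set \<Rightarrow> real set \<Rightarrow> ennreal" where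
  "indicator_dist X Y = (\<integral>\<^sup>+x. ennreal \<bar>indicator X x - indicator Y x\<bar> \<partial>lborel)"

lemma indicator_dist_commute: "indicator_dist X Y = indicator_dist Y X"
  unfolding indicator_dist_def by (simp add: abs_minus_commute)

lemma indicator_dist_self [simp]: "indicator_dist X X = 0"
  unfolding indicator_dist_def by simp

lemma indicator_dist_eq_emeasure:
  assumes [measurable]: "X \<in> sets borel" "Y \<in> sets borel"
  shows "indicator_dist X Y = emeasure lborel ((X - Y) \<union> (Y - X))"
proof -
  have "indicator_dist X Y = (\<integral>\<^sup>+x. indicator ((X - Y) \<union> (Y - X)) x \<partial>lborel)"
    unfolding indicator_dist_def by (intro nn_integral_cong) (auto simp: indicator_def)
  then show ?thesis by simp
qed

lemma indicator_dist_le_emeasure: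
  assumes "X \<in> sets borel" "Y \<in> sets borel" "W \<in> sets borel"
    and "\<And>x. x \<notin> W \<Longrightarrow> x \<in> X \<longleftrightarrow> x \<in> Y"
  shows "indicator_dist X Y \<le> emeasure lborel W"
  unfolding indicator_dist_eq_emeasure[OF assms(1,2)] using assms by (intro emeasure_mono) auto

lemma indicator_dist_triangle:
  assumes "X \<in> sets borel" "Y \<in> sets borel" "Z \<in> sets borel"
  shows "indicator_dist X Z \<le> indicator_dist X Y + indicator_dist Y Z"
  unfolding indicator_dist_eq_emeasure[OF assms(1,2)] indicator_dist_eq_emeasure[OF assms(2,3)]
    indicator_dist_eq_emeasure[OF assms(1,3)]
  using assms by (intro order_trans[OF emeasure_mono emeasure_subadditive]) auto

lemma emeasure_le_add_indicator_dist:
  assumes "X \<in> sets borel" "Y \<in> sets borel" "indicator_dist X Y \<le> \<delta>"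
  shows "emeasure lborel X \<le> emeasure lborel Y + \<delta>"
proof -
  have "emeasure lborel X \<le> emeasure lborel Y + indicator_dist X Y"
    unfolding indicator_dist_eq_emeasure[OF assms(1,2)]
    using assms(1,2) by (intro order_trans[OF emeasure_mono emeasure_subadditive]) auto
  then show ?thesis
    using assms(3) by (meson add_left_mono order_trans)
qed

lemma emeasure_eq_if_indicator_dist_eq_0:
  assumes "X \<in> sets borel" "Y \<in> sets borel" "indicator_dist X Y = 0"
  shows "emeasure lborel X = emeasure lborel Y"
  using emeasure_le_add_indicator_dist[OF assms(1,2), of 0]
    emeasure_le_add_indicator_dist[OF assms(2,1), of 0] assms(3)
  by (simp add: indicator_dist_commute)

lemma indicator_dist_nested_le:
  assumes "X \<in> fmeasurable lborel" "Y \<in> fmeasurable lborel" "X \<subseteq> Y \<or> Y \<subseteq> X"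
    and "emeasure lborel X \<le> emeasure lborel Y + \<delta>" "emeasure lborel Y \<le> emeasure lborel X + \<delta>"
  shows "indicator_dist X Y \<le> \<delta>"
proof -
  have *: "indicator_dist X Y \<le> \<delta>"
    if "X \<in> sets borel" "Y \<in> fmeasurable lborel" "Y \<subseteq> X"
      and "emeasure lborel X \<le> emeasure lborel Y + \<delta>" for X Y
  proof -
    have "emeasure lborel Y + indicator_dist X Y = emeasure lborel X"
      using that emeasure_Un[of Y lborel X]
      by (auto simp: indicator_dist_eq_emeasure Un_absorb1 Diff_eq_empty_iff[THEN iffD2])
    with that have "emeasure lborel Y + indicator_dist X Y \<le> emeasure lborel Y + \<delta>"
      by simp
    with fmeasurableD2[OF that(2)] show ?thesis
      by (simp add: ennreal_add_left_cancel_le)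
  qed
  from assms(3) show ?thesis
    using *[of X Y] *[of Y X] assms by (auto simp: indicator_dist_commute)
qed

section \<open>Polarization\<close>

lemma mem_reflect_pt: "x \<in> reflect_pt a X \<longleftrightarrow> 2 * a - x \<in> X"
  unfolding reflect_pt_def by (auto intro: image_eqI[where x = "2 * a - x"])

lemma mem_polarize:
  "x \<in> polarize a X \<longleftrightarrow> (a \<le> x \<and> (x \<in> X \<or> 2 * a - x \<in> X)) \<or> (x \<le> a \<and> x \<in> X \<and> 2 * a - x \<in> X)"
  unfolding polarize_def by (auto simp: mem_reflect_pt)

lemma polarize_borel [measurable]:
  assumes [measurable]: "X \<in> sets borel"
  shows "polarize a X \<in> sets borel"
proof -
  have "polarize a X = {x. (a \<le> x \<and> (x \<in> X \<or> 2 * a - x \<in> X)) \<or> (x \<le> a \<and> x \<in> X \<and> 2 * a - x \<in> X)}"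
    by (auto simp: mem_polarize)
  also have "\<dots> \<in> sets borel" by measurable
  finally show ?thesis .
qed

lemma nn_integral_reflect_split:
  fixes f :: "real \<Rightarrow> ennreal"
  assumes [measurable]: "f \<in> borel_measurable borel"
  shows "(\<integral>\<^sup>+x. f x \<partial>lborel) = (\<integral>\<^sup>+x. (f x + f (2 * a - x)) * indicator {a<..} x \<partial>lborel)"
proof -
  have "(\<integral>\<^sup>+x. f x \<partial>lborel) = (\<integral>\<^sup>+x. f x * indicator {a<..} x + f x * indicator {..a} x \<partial>lborel)"
    by (intro nn_integral_cong) (auto simp: indicator_def)
  also have "\<dots> = (\<integral>\<^sup>+x. f x * indicator {a<..} x \<partial>lborel) + (\<integral>\<^sup>+x. f x * indicator {..a} x \<partial>lborel)"
    by (intro nn_integral_add) auto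
  also have "(\<integral>\<^sup>+x. f x * indicator {..a} x \<partial>lborel)
      = (\<integral>\<^sup>+x. f (2 * a - x) * indicator {..a} (2 * a - x) \<partial>lborel)"
    using nn_integral_real_affine[of "\<lambda>x. f x * indicator {..a} x" "-1" "2 * a"] by simp
  also have "\<dots> = (\<integral>\<^sup>+x. f (2 * a - x) * indicator {a<..} x \<partial>lborel)"
    by (intro nn_integral_cong_AE, use AE_lborel_singleton[of a] in eventually_elim)
       (auto simp: indicator_def)
  also have "(\<integral>\<^sup>+x. f x * indicator {a<..} x \<partial>lborel) + \<dots>
      = (\<integral>\<^sup>+x. (f x + f (2 * a - x)) * indicator {a<..} x \<partial>lborel)"
    by (subst nn_integral_add[symmetric]) (auto simp: distrib_right)
  finally show ?thesis .
qed

lemma emeasure_polarize: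
  assumes [measurable]: "X \<in> sets borel"
  shows "emeasure lborel (polarize a X) = emeasure lborel X"
proof -
  have "emeasure lborel (polarize a X) = (\<integral>\<^sup>+x. indicator (polarize a X) x \<partial>lborel)"
    by simp
  also have "\<dots> = (\<integral>\<^sup>+x. (indicator (polarize a X) x + indicator (polarize a X) (2 * a - x))
      * indicator {a<..} x \<partial>lborel)"
    by (intro nn_integral_reflect_split) measurable
  also have "\<dots> = (\<integral>\<^sup>+x. (indicator X x + indicator X (2 * a - x)) * indicator {a<..} x \<partial>lborel)"
    by (intro nn_integral_cong) (auto simp: indicator_def mem_polarize)
  also have "\<dots> = (\<integral>\<^sup>+x. indicator X x \<partial>lborel)"
    by (intro nn_integral_reflect_split[symmetric]) measurable
  finally show ?thesis by simp
qed

lemma indicator_dist_polarize_le: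
  assumes [measurable]: "X \<in> sets borel" "Y \<in> sets borel"
  shows "indicator_dist (polarize a X) (polarize a Y) \<le> indicator_dist X Y"
proof -
  let ?g = "\<lambda>x. ennreal \<bar>indicator (polarize a X) x - indicator (polarize a Y) x\<bar>"
  let ?f = "\<lambda>x. ennreal \<bar>indicator X x - indicator Y x\<bar>"
  have "indicator_dist (polarize a X) (polarize a Y)
      = (\<integral>\<^sup>+x. (?g x + ?g (2 * a - x)) * indicator {a<..} x \<partial>lborel)"
    unfolding indicator_dist_def by (intro nn_integral_reflect_split) measurable
  also have "\<dots> \<le> (\<integral>\<^sup>+x. (?f x + ?f (2 * a - x)) * indicator {a<..} x \<partial>lborel)"
    by (intro nn_integral_mono) (auto simp: indicator_def mem_polarize)
  also have "\<dots> = indicator_dist X Y"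
    unfolding indicator_dist_def by (intro nn_integral_reflect_split[symmetric]) measurable
  finally show ?thesis .
qed

definition polarize_grid :: "real \<Rightarrow> int list \<Rightarrow> real set \<Rightarrow> real set" where
  "polarize_grid d ks X = fold (\<lambda>k. polarize (of_int k * d)) ks X"

lemma polarize_grid_Nil [simp]: "polarize_grid d [] X = X"
  and polarize_grid_Cons [simp]:
    "polarize_grid d (k # ks) X = polarize_grid d ks (polarize (of_int k * d) X)"
  by (simp_all add: polarize_grid_def)

lemma A_m0_eq_polarize_grid: "A_m0 m X = polarize_grid (1 / 2 ^ m) [- (2 ^ (2 * m)) .. 0] X"
  unfolding A_m0_def polarize_grid_def by simp

lemma polarize_grid_borel [measurable]:
  "X \<in> sets borel \<Longrightarrow> polarize_grid d ks X \<in> sets borel"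
  by (induction ks arbitrary: X) simp_all

lemma emeasure_polarize_grid:
  "X \<in> sets borel \<Longrightarrow> emeasure lborel (polarize_grid d ks X) = emeasure lborel X"
  by (induction ks arbitrary: X) (simp_all add: emeasure_polarize)

lemma indicator_dist_polarize_grid_le:
  assumes "X \<in> sets borel" "Y \<in> sets borel"
  shows "indicator_dist (polarize_grid d ks X) (polarize_grid d ks Y) \<le> indicator_dist X Y"
  using assms
proof (induction ks arbitrary: X Y)
  case (Cons k ks)
  show ?case
    using order_trans[OF Cons.IH[OF polarize_borel polarize_borel] indicator_dist_polarize_le]
      Cons.prems
    by simp
qed simp

section \<open>Polarizing unions of grid cells\<close>

definition grid_set :: "real \<Rightarrow> int set \<Rightarrow> real set" where
  "grid_set d E = {x. \<lfloor>x / d\<rfloor> \<in> E}"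

text \<open>Cell \<open>n\<close> of \<^term>\<open>grid_set d E\<close> is \<open>[n d, (n + 1) d)\<close>; the reflection in the grid point
  \<open>k d\<close> maps it onto cell \<open>2 k - 1 - n\<close>.\<close>
definition polarize_int :: "int \<Rightarrow> int set \<Rightarrow> int set" where
  "polarize_int k E =
    {n. (k \<le> n \<and> (n \<in> E \<or> 2 * k - 1 - n \<in> E)) \<or> (n < k \<and> n \<in> E \<and> 2 * k - 1 - n \<in> E)}"

lemma grid_set_borel [measurable]: "grid_set d E \<in> sets borel"
  unfolding grid_set_def by measurable

lemma floor_reflect_grid_point:
  fixes d x :: real
  assumes "0 < d" "x \<notin> range (\<lambda>j::int. of_int j * d)"
  shows "\<lfloor>(2 * (of_int k * d) - x) / d\<rfloor> = 2 * k - 1 - \<lfloor>x / d\<rfloor>"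
proof -
  have "x / d \<noteq> of_int \<lfloor>x / d\<rfloor>"
    using assms by (auto simp: field_simps)
  then have "of_int \<lfloor>x / d\<rfloor> < x / d" "x / d < of_int \<lfloor>x / d\<rfloor> + 1"
    by linarith+
  moreover have "(2 * (of_int k * d) - x) / d = 2 * of_int k - x / d"
    using assms by (simp add: field_simps)
  ultimately show ?thesis
    by (intro floor_unique) (simp; linarith)+
qed

lemma indicator_dist_polarize_grid_set:
  assumes "0 < d"
  shows "indicator_dist (polarize (of_int k * d) (grid_set d E)) (grid_set d (polarize_int k E))
    = 0"
proof -
  let ?W = "range (\<lambda>j::int. of_int j * d)"
  have null: "?W \<in> null_sets lborel"
    by (intro countable_imp_null_set_lborel) auto
  have "x \<in> polarize (of_int k * d) (grid_set d E) \<longleftrightarrow> x \<in> grid_set d (polarize_int k E)"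
    if "x \<notin> ?W" for x
  proof -
    have "of_int k * d \<le> x \<longleftrightarrow> k \<le> \<lfloor>x / d\<rfloor>"
      using assms by (simp add: le_floor_iff field_simps)
    moreover have "x \<noteq> of_int k * d"
      using that by auto
    ultimately show ?thesis
      using floor_reflect_grid_point[OF assms that, of k]
      unfolding mem_polarize grid_set_def polarize_int_def by auto
  qed
  then have "indicator_dist (polarize (of_int k * d) (grid_set d E)) (grid_set d (polarize_int k E))
      \<le> emeasure lborel ?W"
    using null by (intro indicator_dist_le_emeasure) auto
  then show ?thesis
    using null_setsD1[OF null] by simp
qed

lemma indicator_dist_polarize_grid_grid_set:
  assumes "0 < d"
  shows "indicator_dist (polarize_grid d ks (grid_set d E)) (grid_set d (fold polarize_int ks E))
    = 0"
proof (induction ks arbitrary: E)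
  case (Cons k ks)
  let ?P = "polarize (of_int k * d) (grid_set d E)"
  let ?Q = "grid_set d (polarize_int k E)"
  let ?R = "grid_set d (fold polarize_int ks (polarize_int k E))"
  have "indicator_dist (polarize_grid d ks ?P) ?R
      \<le> indicator_dist (polarize_grid d ks ?P) (polarize_grid d ks ?Q)
        + indicator_dist (polarize_grid d ks ?Q) ?R"
    by (intro indicator_dist_triangle) measurable
  also have "\<dots> \<le> indicator_dist ?P ?Q"
    using Cons.IH[of "polarize_int k E"] by (simp add: indicator_dist_polarize_grid_le)
  also have "\<dots> = 0"
    using indicator_dist_polarize_grid_set[OF assms] .
  finally show ?case by simp
qed simp

definition pair_aligned :: "int set \<Rightarrow> bool" where
  "pair_aligned E \<longleftrightarrow> (\<forall>p. even p \<longrightarrow> (p \<in> E \<longleftrightarrow> p + 1 \<in> E))"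

definition centered_block :: "int \<Rightarrow> int \<Rightarrow> int set \<Rightarrow> int set" where
  "centered_block c h E = {c - h..<c + h} \<union> {n \<in> E. c + h \<le> n}"

lemma polarize_int_centered_block:
  assumes "k \<le> c" "0 \<le> h"
  shows "polarize_int k (centered_block c h E) = centered_block c h E"
  unfolding set_eq_iff polarize_int_def centered_block_def mem_Collect_eq Un_iff atLeastLessThan_iff
  using assms by smt

lemma centered_block_grow:
  assumes "c + h \<in> E" "c + h + 1 \<in> E" "0 \<le> h"
  shows "centered_block c h E = centered_block (c + 1) (h + 1) E"
  unfolding set_eq_iff centered_block_def mem_Collect_eq Un_iff atLeastLessThan_iff
  using assms by smt

lemma polarize_int_centered_block_shift:
  assumes "c + h \<notin> E" "c + h + 1 \<notin> E" "0 \<le> h"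
  shows "polarize_int (c + 1) (centered_block c h E) = centered_block (c + 2) h E"
  unfolding set_eq_iff polarize_int_def centered_block_def mem_Collect_eq Un_iff atLeastLessThan_iff
  using assms by smt

lemma polarize_int_centered_block_step:
  assumes "pair_aligned E" "k \<le> c" "c \<le> k + 1" "0 \<le> h" "even (c + h)"
  shows "\<exists>c' h'. k + 1 \<le> c' \<and> c' \<le> k + 2 \<and> 0 \<le> h' \<and> even (c' + h') \<and>
    polarize_int (k + 1) (centered_block c h E) = centered_block c' h' E"
proof -
  consider "c = k + 1" | "c = k" "c + h \<in> E" | "c = k" "c + h \<notin> E"
    using assms(2,3) by linarith
  then show ?thesis
  proof cases
    case 1
    then show ?thesis
      using assms by (intro exI[of _ c] exI[of _ h]) (simp add: polarize_int_centered_block)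
  next
    case 2
    then have "c + h + 1 \<in> E"
      using assms(1,5) unfolding pair_aligned_def by blast
    then have "centered_block c h E = centered_block (c + 1) (h + 1) E"
      using 2 assms(4) by (intro centered_block_grow) auto
    then show ?thesis
      using 2 assms
      by (intro exI[of _ "c + 1"] exI[of _ "h + 1"]) (simp add: polarize_int_centered_block)
  next
    case 3
    then have "c + h + 1 \<notin> E"
      using assms(1,5) unfolding pair_aligned_def by blast
    then show ?thesis
      using 3 assms polarize_int_centered_block_shift[of c h E]
      by (intro exI[of _ "c + 2"] exI[of _ h]) simp
  qed
qed

text \<open>Pair alignment is what keeps the block centered at the sweep point: the sweep meets the
  cells of \<open>E\<close> two at a time.\<close>
lemma fold_polarize_int_sweep:
  assumes "pair_aligned E" "E \<subseteq> {k0..}" "even k0" "k0 - 1 \<le> k"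
  shows "\<exists>c h. k \<le> c \<and> c \<le> k + 1 \<and> 0 \<le> h \<and> even (c + h) \<and>
    fold polarize_int [k0..k] E = centered_block c h E"
  using assms(4)
proof (induction k rule: int_ge_induct)
  case base
  have "centered_block k0 0 E = E"
    using assms(2) unfolding centered_block_def by auto
  then show ?case
    using assms(3) by (intro exI[of _ k0] exI[of _ 0]) simp
next
  case (step k)
  then obtain c h where "k \<le> c" "c \<le> k + 1" "0 \<le> h" "even (c + h)"
    and fold: "fold polarize_int [k0..k] E = centered_block c h E"
    by blast
  moreover have
    "fold polarize_int [k0..k + 1] E = polarize_int (k + 1) (fold polarize_int [k0..k] E)"
    using step.hyps upto_rec2[of k0 "k + 1"] by simp
  ultimately show ?case
    using polarize_int_centered_block_step[OF assms(1)] by (simp add: add.assoc)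
qed

lemma grid_set_centered_block:
  assumes "0 < d"
  shows "grid_set d (centered_block c h E)
    = {of_int c * d - of_int h * d..<of_int c * d + of_int h * d}
      \<union> (grid_set d E \<inter> {of_int c * d + of_int h * d..})"
proof -
  have "z \<le> x / d \<longleftrightarrow> z * d \<le> x" "x / d < z \<longleftrightarrow> x < z * d" for z x :: real
    using assms by (simp_all add: field_simps)
  then show ?thesis
    unfolding grid_set_def centered_block_def
    by (auto simp: le_floor_iff floor_less_iff algebra_simps)
qed

section \<open>The Solynin map\<close>

definition solynin_with_radius :: "real \<Rightarrow> real set \<Rightarrow> real set" where
  "solynin_with_radius r X = {-r..r} \<union> (X \<inter> {0..})"

lemma solynin_eq_solynin_with_radius: "solynin X = solynin_with_radius (solynin_radius X) X"
  unfolding solynin_def solynin_with_radius_def ..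

lemma fmeasurable_Icc_real [simp]: "{a..b::real} \<in> fmeasurable lborel"
  by (simp add: fmeasurable_compact)

lemma fmeasurable_solynin_with_radius:
  "X \<in> fmeasurable lborel \<Longrightarrow> solynin_with_radius r X \<in> fmeasurable lborel"
  unfolding solynin_with_radius_def by (intro fmeasurable.Un fmeasurable_Int_fmeasurable) auto

lemma solynin_with_radius_borel [measurable]:
  "X \<in> sets borel \<Longrightarrow> solynin_with_radius r X \<in> sets borel"
  unfolding solynin_with_radius_def by auto

lemma measure_solynin_with_radius_le:
  assumes "X \<in> fmeasurable lborel" "0 \<le> s" "s \<le> r"
  shows "measure lborel (solynin_with_radius s X) \<le> measure lborel (solynin_with_radius r X)"
    and "measure lborel (solynin_with_radius r X)
      \<le> measure lborel (solynin_with_radius s X) + 2 * (r - s)"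
proof -
  show "measure lborel (solynin_with_radius s X) \<le> measure lborel (solynin_with_radius r X)"
    using assms by (intro measure_mono_fmeasurable fmeasurable_solynin_with_radius)
      (auto simp: solynin_with_radius_def)
  have "solynin_with_radius r X \<subseteq> solynin_with_radius s X \<union> ({-r..-s} \<union> {s..r})"
    unfolding solynin_with_radius_def by auto
  then have "measure lborel (solynin_with_radius r X)
      \<le> measure lborel (solynin_with_radius s X \<union> ({-r..-s} \<union> {s..r}))"
    using assms(1)
    by (intro measure_mono_fmeasurable fmeasurable.Un fmeasurableD fmeasurable_solynin_with_radius)
      auto
  also have "\<dots> \<le> measure lborel (solynin_with_radius s X)
      + (measure lborel {-r..-s} + measure lborel {s..r})"
    using assms(1)
    by (intro order_trans[OF measure_Un_le add_left_mono[OF measure_Un_le]])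
      (auto intro: solynin_with_radius_borel)
  finally show "measure lborel (solynin_with_radius r X)
      \<le> measure lborel (solynin_with_radius s X) + 2 * (r - s)"
    using assms by simp
qed

lemma solynin_radius_exists:
  assumes "X \<in> fmeasurable lborel"
  shows "\<exists>r\<ge>0. measure lborel (solynin_with_radius r X) = measure lborel X"
proof -
  let ?g = "\<lambda>r. measure lborel (solynin_with_radius r X)"
  let ?M = "measure lborel X"
  have "?g 0 \<le> measure lborel {0..0::real} + measure lborel (X \<inter> {0..})"
    using assms unfolding solynin_with_radius_def minus_zero by (intro measure_Un_le) auto
  also have "\<dots> \<le> ?M"
    using assms by (auto intro: measure_mono_fmeasurable)
  finally have "?g 0 \<le> ?M" .
  moreover have "?M \<le> ?g ?M"
  proof -
    have "measure lborel {-?M..?M} \<le> ?g ?M"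
      using assms by (intro measure_mono_fmeasurable fmeasurable_solynin_with_radius)
        (auto simp: solynin_with_radius_def)
    moreover have "measure lborel {-?M..?M} = 2 * ?M"
      by simp
    ultimately show ?thesis
      using measure_nonneg[of lborel X] by linarith
  qed
  moreover have "continuous_on {0..?M} ?g"
  proof (rule lipschitz_on_continuous_on)
    show "2-lipschitz_on {0..?M} ?g"
    proof (rule lipschitz_onI)
      fix r s assume "r \<in> {0..?M}" "s \<in> {0..?M}"
      then show "dist (?g r) (?g s) \<le> 2 * dist r s"
        using measure_solynin_with_radius_le[OF assms, of r s]
          measure_solynin_with_radius_le[OF assms, of s r]
        by (cases "s \<le> r") (auto simp: dist_real_def)
    qed simp
  qed
  ultimately show ?thesis
    using IVT'[of ?g 0 ?M ?M] by auto
qed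

lemma emeasure_solynin:
  assumes "X \<in> fmeasurable lborel"
  shows "emeasure lborel (solynin X) = emeasure lborel X"
proof -
  have lebesgue_eq:
    "measure lebesgue (solynin_with_radius r X) = measure lborel (solynin_with_radius r X)"
    "measure lebesgue X = measure lborel X" for r
    using assms fmeasurable_solynin_with_radius[OF assms, of r] by auto
  have "measure lborel (solynin X) = measure lborel X"
    using someI_ex[OF solynin_radius_exists[OF assms]]
    unfolding solynin_radius_def solynin_eq_solynin_with_radius
    by (simp add: lebesgue_eq(2) lebesgue_eq(1)[unfolded solynin_with_radius_def, symmetric]
        solynin_with_radius_def)
  then show ?thesis
    using assms fmeasurable_solynin_with_radius[OF assms]
    by (simp add: solynin_eq_solynin_with_radius emeasure_eq_measure2)
qed

lemma solynin_borel [measurable]: "X \<in> sets borel \<Longrightarrow> solynin X \<in> sets borel"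
  unfolding solynin_eq_solynin_with_radius by (rule solynin_with_radius_borel)

lemma indicator_dist_solynin_with_radius_solynin:
  assumes C: "C \<in> fmeasurable lborel"
    and "emeasure lborel (solynin_with_radius \<rho> C) \<le> emeasure lborel C + \<delta>"
    and "emeasure lborel C \<le> emeasure lborel (solynin_with_radius \<rho> C) + \<delta>"
  shows "indicator_dist (solynin_with_radius \<rho> C) (solynin C) \<le> \<delta>"
proof -
  have "solynin_with_radius \<rho> C \<subseteq> solynin C \<or> solynin C \<subseteq> solynin_with_radius \<rho> C"
    unfolding solynin_eq_solynin_with_radius
    by (cases "\<rho> \<le> solynin_radius C") (auto simp: solynin_with_radius_def)
  then show ?thesis
    using assms emeasure_solynin[OF C] fmeasurable_solynin_with_radius[OF C]
    by (intro indicator_dist_nested_le) (auto simp: solynin_eq_solynin_with_radius)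
qed

lemma indicator_dist_solynin_le:
  assumes A: "A \<in> fmeasurable lborel" and C: "C \<in> fmeasurable lborel"
  shows "indicator_dist (solynin A) (solynin C) \<le> 3 * indicator_dist A C"
proof -
  define r where "r = solynin_radius A"
  define \<delta> where "\<delta> = indicator_dist A C"
  have AC: "A \<in> sets borel" "C \<in> sets borel"
    using A C by auto
  have rA: "emeasure lborel (solynin_with_radius r A) = emeasure lborel A"
    using emeasure_solynin[OF A] by (simp add: solynin_eq_solynin_with_radius r_def)
  have near: "indicator_dist (solynin_with_radius r A) (solynin_with_radius r C) \<le> \<delta>"
    unfolding indicator_dist_def \<delta>_def
    by (intro nn_integral_mono) (auto simp: solynin_with_radius_def indicator_def)
  have "emeasure lborel (solynin_with_radius r C) \<le> emeasure lborel C + 2 * \<delta>"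
  proof -
    have "emeasure lborel (solynin_with_radius r C) \<le> emeasure lborel A + \<delta>"
      using emeasure_le_add_indicator_dist[of "solynin_with_radius r C" "solynin_with_radius r A" \<delta>]
        near AC rA by (simp add: indicator_dist_commute)
    also have "\<dots> \<le> emeasure lborel C + \<delta> + \<delta>"
      using emeasure_le_add_indicator_dist[OF AC, of \<delta>] by (simp add: \<delta>_def add_right_mono)
    finally show ?thesis
      by (simp add: mult_2 add.assoc)
  qed
  moreover have "emeasure lborel C \<le> emeasure lborel (solynin_with_radius r C) + 2 * \<delta>"
  proof -
    have "emeasure lborel C \<le> emeasure lborel (solynin_with_radius r A) + \<delta>"
      using emeasure_le_add_indicator_dist[of C A \<delta>] AC rA
      by (simp add: \<delta>_def indicator_dist_commute)
    also have "\<dots> \<le> emeasure lborel (solynin_with_radius r C) + \<delta> + \<delta>"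
      using emeasure_le_add_indicator_dist[OF _ _ near] AC by (intro add_right_mono) simp
    finally show ?thesis
      by (simp add: mult_2 add.assoc)
  qed
  ultimately have far: "indicator_dist (solynin_with_radius r C) (solynin C) \<le> 2 * \<delta>"
    by (rule indicator_dist_solynin_with_radius_solynin[OF C])
  have "indicator_dist (solynin A) (solynin C)
      \<le> indicator_dist (solynin_with_radius r A) (solynin_with_radius r C)
        + indicator_dist (solynin_with_radius r C) (solynin C)"
    unfolding solynin_eq_solynin_with_radius[of A] r_def[symmetric]
    using AC by (intro indicator_dist_triangle) auto
  also have "\<dots> \<le> \<delta> + 2 * \<delta>"
    using near far by (rule add_mono)
  also have "\<dots> = 3 * \<delta>"
    using distrib_right[of 1 2 \<delta>] by simp
  finally show ?thesis
    by (simp add: \<delta>_def)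
qed

lemma indicator_dist_centered_interval_solynin:
  assumes C: "C \<in> fmeasurable lborel" and "0 \<le> a" "0 \<le> \<rho>"
    and B: "emeasure lborel ({a - \<rho>..<a + \<rho>} \<union> (C \<inter> {a + \<rho>..})) = emeasure lborel C"
  shows "indicator_dist ({a - \<rho>..<a + \<rho>} \<union> (C \<inter> {a + \<rho>..})) (solynin C) \<le> ennreal (4 * a)"
proof -
  define B where "B = {a - \<rho>..<a + \<rho>} \<union> (C \<inter> {a + \<rho>..})"
  define S where "S = solynin_with_radius \<rho> C"
  have CB: "C \<in> sets borel"
    using C by auto
  have fm: "B \<in> fmeasurable lborel" "S \<in> fmeasurable lborel" "solynin C \<in> fmeasurable lborel"
    using C fmeasurable_solynin_with_radius[OF C]
    by (auto simp: B_def S_def solynin_eq_solynin_with_radius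
        intro!: fmeasurable.Un fmeasurable_Int_fmeasurable
        intro: fmeasurableI2[of "{a - \<rho>..a + \<rho>}"])
  have "indicator_dist B S \<le> emeasure lborel ({-\<rho>..a - \<rho>} \<union> {\<rho>..a + \<rho>})"
    using CB assms(2,3) unfolding B_def S_def
    by (intro indicator_dist_le_emeasure) (auto simp: solynin_with_radius_def)
  also have "\<dots> \<le> emeasure lborel {-\<rho>..a - \<rho>} + emeasure lborel {\<rho>..a + \<rho>}"
    by (intro emeasure_subadditive) auto
  also have "\<dots> = ennreal (2 * a)"
    using assms(2) by (simp add: ennreal_plus[symmetric] del: ennreal_plus)
  finally have near: "indicator_dist B S \<le> ennreal (2 * a)" .
  then have near': "indicator_dist S B \<le> ennreal (2 * a)"
    by (simp add: indicator_dist_commute)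
  have "B \<in> sets borel" "S \<in> sets borel"
    using fm by auto
  then have far: "indicator_dist S (solynin C) \<le> ennreal (2 * a)"
    using emeasure_le_add_indicator_dist[of S B, OF _ _ near']
      emeasure_le_add_indicator_dist[of B S, OF _ _ near] B
    unfolding S_def by (intro indicator_dist_solynin_with_radius_solynin[OF C]) (auto simp: B_def)
  have "indicator_dist B (solynin C) \<le> indicator_dist B S + indicator_dist S (solynin C)"
    using fm by (intro indicator_dist_triangle) auto
  also have "\<dots> \<le> ennreal (2 * a) + ennreal (2 * a)"
    using near far by (rule add_mono)
  also have "\<dots> = ennreal (4 * a)"
    using assms(2) by (simp add: ennreal_plus[symmetric] del: ennreal_plus)
  finally show ?thesis
    by (simp add: B_def)
qed

lemma indicator_dist_polarize_grid_solynin_le: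
  assumes A: "A \<in> fmeasurable lborel" and C: "C \<in> fmeasurable lborel"
  shows "indicator_dist (polarize_grid d ks A) (solynin A)
    \<le> indicator_dist (polarize_grid d ks C) (solynin C) + 4 * indicator_dist A C"
proof -
  have [measurable]: "A \<in> sets borel" "C \<in> sets borel"
    using A C by auto
  have "indicator_dist (polarize_grid d ks A) (solynin A)
      \<le> indicator_dist (polarize_grid d ks A) (polarize_grid d ks C)
        + (indicator_dist (polarize_grid d ks C) (solynin C)
          + indicator_dist (solynin C) (solynin A))"
    by (intro order_trans[OF indicator_dist_triangle add_left_mono[OF indicator_dist_triangle]])
      measurable
  also have "\<dots> \<le> indicator_dist A C
      + (indicator_dist (polarize_grid d ks C) (solynin C) + 3 * indicator_dist A C)"
    using indicator_dist_solynin_le[OF C A]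
    by (intro add_mono indicator_dist_polarize_grid_le order.refl)
      (auto simp: indicator_dist_commute)
  also have "\<dots> = indicator_dist (polarize_grid d ks C) (solynin C) + 4 * indicator_dist A C"
    using distrib_right[of 1 3 "indicator_dist A C"] by (simp add: ac_simps)
  finally show ?thesis .
qed

lemma indicator_dist_polarize_grid_solynin_aligned:
  assumes "0 < d" "pair_aligned E" "E \<subseteq> {k0..}" "even k0" "k0 \<le> 0"
    and C: "grid_set d E \<in> fmeasurable lborel"
  shows "indicator_dist (polarize_grid d [k0..0] (grid_set d E)) (solynin (grid_set d E))
    \<le> ennreal (4 * d)"
proof -
  obtain c h where c: "0 \<le> c" "c \<le> 1" and "0 \<le> h"
    and sweep: "fold polarize_int [k0..0] E = centered_block c h E"
    using fold_polarize_int_sweep[OF assms(2-4), of 0] assms(5) by auto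
  define P where "P = polarize_grid d [k0..0] (grid_set d E)"
  define B where "B = grid_set d (centered_block c h E)"
  have PB: "indicator_dist P B = 0"
    using indicator_dist_polarize_grid_grid_set[OF assms(1), of "[k0..0]" E]
    by (simp add: P_def B_def sweep)
  then have "emeasure lborel B = emeasure lborel (grid_set d E)"
    using emeasure_eq_if_indicator_dist_eq_0[of P B]
      emeasure_polarize_grid[of "grid_set d E" d "[k0..0]"]
    by (simp add: P_def B_def)
  then have "indicator_dist B (solynin (grid_set d E)) \<le> ennreal (4 * (of_int c * d))"
    using indicator_dist_centered_interval_solynin[OF C, of "of_int c * d" "of_int h * d"]
      assms(1) c \<open>0 \<le> h\<close>
    by (simp add: B_def grid_set_centered_block)
  also have "\<dots> \<le> ennreal (4 * d)"
    using c assms(1) by (intro ennreal_leI) simp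
  finally have "indicator_dist B (solynin (grid_set d E)) \<le> ennreal (4 * d)" .
  then show ?thesis
    using indicator_dist_triangle[of P B "solynin (grid_set d E)"] PB
    by (simp add: P_def B_def order_trans)
qed

section \<open>Approximation by grid cells\<close>

text \<open>The index set of the aligned pairs of cells \<open>{2 p, 2 p + 1}\<close> that meet \<open>A\<close>.\<close>
definition grid_hull :: "real \<Rightarrow> real set \<Rightarrow> int set" where
  "grid_hull d A = {n. \<exists>y\<in>A. \<lfloor>y / d\<rfloor> div 2 = n div 2}"

lemma pair_aligned_grid_hull: "pair_aligned (grid_hull d A)"
  unfolding pair_aligned_def grid_hull_def by auto

lemma subset_grid_set_grid_hull: "A \<subseteq> grid_set d (grid_hull d A)"
  unfolding grid_set_def grid_hull_def by auto

lemma grid_hull_near: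
  assumes "n \<in> grid_hull d A"
  shows "\<exists>y\<in>A. \<lfloor>y / d\<rfloor> - 1 \<le> n \<and> n \<le> \<lfloor>y / d\<rfloor> + 1"
proof -
  obtain y where "y \<in> A" "\<lfloor>y / d\<rfloor> div 2 = n div 2"
    using assms unfolding grid_hull_def by auto
  moreover have "\<lfloor>y / d\<rfloor> - 1 \<le> n \<and> n \<le> \<lfloor>y / d\<rfloor> + 1" if "\<lfloor>y / d\<rfloor> div 2 = n div 2" for y
    using that by presburger
  ultimately show ?thesis by blast
qed

lemma dist_grid_set_grid_hull:
  assumes "0 < d" "x \<in> grid_set d (grid_hull d A)"
  shows "\<exists>y\<in>A. \<bar>x - y\<bar> < 2 * d"
proof -
  obtain y where "y \<in> A" "\<lfloor>y / d\<rfloor> - 1 \<le> \<lfloor>x / d\<rfloor>" "\<lfloor>x / d\<rfloor> \<le> \<lfloor>y / d\<rfloor> + 1"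
    using grid_hull_near assms(2) unfolding grid_set_def by blast
  then have "\<bar>x / d - y / d\<bar> < 2"
    by linarith
  then have "\<bar>x - y\<bar> / d < 2"
    using assms(1) by (simp add: diff_divide_distrib[symmetric] abs_divide)
  then show ?thesis
    using \<open>y \<in> A\<close> assms(1) by (auto simp: field_simps)
qed

lemma grid_hull_subset_atLeast:
  assumes "0 < d" "A \<subseteq> {-R..}" "of_int k0 \<le> - R / d - 2"
  shows "grid_hull d A \<subseteq> {k0..}"
proof
  fix n assume "n \<in> grid_hull d A"
  then obtain y where "y \<in> A" "\<lfloor>y / d\<rfloor> - 1 \<le> n"
    using grid_hull_near by blast
  moreover have "- R / d \<le> y / d"
    using \<open>y \<in> A\<close> assms(1,2) divide_right_mono[of "-R" y d] by auto
  ultimately show "n \<in> {k0..}"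
    using assms(3) by simp linarith
qed

lemma fmeasurable_grid_set_grid_hull:
  assumes "0 < d" "A \<subseteq> {-R..R}"
  shows "grid_set d (grid_hull d A) \<in> fmeasurable lborel"
proof (rule fmeasurableI2)
  show "grid_set d (grid_hull d A) \<subseteq> {-R - 2 * d..R + 2 * d}"
    using dist_grid_set_grid_hull[OF assms(1)] assms(2) by (force simp: abs_less_iff)
qed auto

lemma indicator_dist_grid_hull_less:
  assumes "compact A" "0 < \<epsilon>"
  obtains \<delta> where "0 < \<delta>"
    "\<And>d. 0 < d \<Longrightarrow> d < \<delta> \<Longrightarrow> indicator_dist A (grid_set d (grid_hull d A)) < ennreal \<epsilon>"
proof -
  have A: "A \<in> sets borel"
    using assms(1) by (simp add: compact_imp_closed)
  then obtain U where U: "open U" "A \<subseteq> U" "emeasure lebesgue (U - A) < ennreal \<epsilon>"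
    using sets_lebesgue_outer_open[of A \<epsilon>] assms(2) by auto
  have UA: "U - A \<in> sets borel"
    using U(1) A by auto
  obtain \<eta> where "0 < \<eta>" and \<eta>: "(\<Union>y\<in>A. ball y \<eta>) \<subseteq> U"
    using compact_subset_open_imp_ball_epsilon_subset[OF assms(1) U(1,2)] by blast
  show ?thesis
  proof
    show "0 < \<eta> / 2"
      using \<open>0 < \<eta>\<close> by simp
    fix d :: real assume "0 < d" "d < \<eta> / 2"
    have "grid_set d (grid_hull d A) \<subseteq> U"
    proof
      fix x assume "x \<in> grid_set d (grid_hull d A)"
      then obtain y where "y \<in> A" "\<bar>x - y\<bar> < \<eta>"
        using dist_grid_set_grid_hull[OF \<open>0 < d\<close>] \<open>d < \<eta> / 2\<close> by fastforce
      then have "x \<in> ball y \<eta>"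
        by (simp add: dist_real_def abs_minus_commute)
      then show "x \<in> U"
        using \<eta> \<open>y \<in> A\<close> by blast
    qed
    then have "indicator_dist A (grid_set d (grid_hull d A)) \<le> emeasure lborel (U - A)"
      using A UA subset_grid_set_grid_hull[of A d] by (intro indicator_dist_le_emeasure) auto
    also have "\<dots> < ennreal \<epsilon>"
      using U(3) UA by simp
    finally show "indicator_dist A (grid_set d (grid_hull d A)) < ennreal \<epsilon>" .
  qed
qed

lemma indicator_dist_grid_hull_tendsto:
  assumes "compact A"
  shows "(\<lambda>m. indicator_dist A (grid_set (1 / 2 ^ m) (grid_hull (1 / 2 ^ m) A))) \<longlonglongrightarrow> 0"
proof (rule tendsto_zero_ennreal)
  fix \<epsilon> :: real assume "0 < \<epsilon>"
  then obtain \<delta> where "0 < \<delta>" and approx: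
    "\<And>d. 0 < d \<Longrightarrow> d < \<delta> \<Longrightarrow> indicator_dist A (grid_set d (grid_hull d A)) < ennreal \<epsilon>"
    using indicator_dist_grid_hull_less[OF assms] by blast
  have "\<forall>\<^sub>F m in sequentially. 1 / 2 ^ m < \<delta>"
    using \<open>0 < \<delta>\<close> by (intro order_tendstoD(2)[OF LIMSEQ_divide_realpow_zero]) auto
  then show "\<forall>\<^sub>F m in sequentially.
      indicator_dist A (grid_set (1 / 2 ^ m) (grid_hull (1 / 2 ^ m) A)) < ennreal \<epsilon>"
    by eventually_elim (simp add: approx)
qed

lemma indicator_dist_A_m0_solynin_le:
  assumes A: "A \<in> fmeasurable lborel" and R: "A \<subseteq> {-R..R}" and "1 \<le> m" "R + 2 \<le> 2 ^ m"
  shows "indicator_dist (A_m0 m A) (solynin A)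
    \<le> ennreal (4 / 2 ^ m) + 4 * indicator_dist A (grid_set (1 / 2 ^ m) (grid_hull (1 / 2 ^ m) A))"
proof -
  define d :: real where "d = 1 / 2 ^ m"
  define k0 :: int where "k0 = - (2 ^ (2 * m))"
  define C where "C = grid_set d (grid_hull d A)"
  have "0 < d"
    by (simp add: d_def)
  have "R * 2 ^ m + 2 \<le> (R + 2) * 2 ^ m"
    by (simp add: algebra_simps)
  also have "\<dots> \<le> 2 ^ m * 2 ^ m"
    using assms(4) by (intro mult_right_mono) auto
  finally have "of_int k0 \<le> - R / d - 2"
    by (simp add: k0_def d_def flip: power_add mult_2)
  then have "indicator_dist (polarize_grid d [k0..0] C) (solynin C) \<le> ennreal (4 * d)"
    unfolding C_def using \<open>0 < d\<close> R assms(3)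
    by (intro indicator_dist_polarize_grid_solynin_aligned pair_aligned_grid_hull
        grid_hull_subset_atLeast fmeasurable_grid_set_grid_hull) (auto simp: k0_def)
  moreover have "indicator_dist (A_m0 m A) (solynin A)
      \<le> indicator_dist (polarize_grid d [k0..0] C) (solynin C) + 4 * indicator_dist A C"
    unfolding A_m0_eq_polarize_grid d_def[symmetric] k0_def[symmetric] C_def
    using A R \<open>0 < d\<close>
    by (intro indicator_dist_polarize_grid_solynin_le fmeasurable_grid_set_grid_hull)
  ultimately show ?thesis
    by (simp add: C_def d_def add_right_mono order_trans)
qed

theorem lemma8p3:
  fixes A :: "real set"
  assumes "compact A"
  shows "(\<lambda>m. \<integral>\<^sup>+ x. ennreal \<bar>indicator (A_m0 m A) x - indicator (solynin A) x\<bar> \<partial>lborel)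
           \<longlonglongrightarrow> 0"
proof -
  obtain R where R: "A \<subseteq> {-R..R}"
    using bounded_subset_cbox_symmetric[OF compact_imp_bounded[OF assms]]
    by (auto simp: cbox_interval)
  have "\<forall>\<^sub>F m in sequentially. 1 / 2 ^ m < 1 / (\<bar>R\<bar> + 2)"
    by (intro order_tendstoD(2)[OF LIMSEQ_divide_realpow_zero]) auto
  then have bound: "\<forall>\<^sub>F m in sequentially. indicator_dist (A_m0 m A) (solynin A)
      \<le> ennreal (4 / 2 ^ m) + 4 * indicator_dist A (grid_set (1 / 2 ^ m) (grid_hull (1 / 2 ^ m) A))"
    using eventually_ge_at_top[of "1::nat"]
  proof eventually_elim
    case (elim m)
    then have "R + 2 \<le> 2 ^ m"
      by (simp add: field_simps)
    with elim(2) show ?case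
      by (rule indicator_dist_A_m0_solynin_le[OF fmeasurable_compact[OF assms] R])
  qed
  have "(\<lambda>m. ennreal (4 / 2 ^ m)) \<longlonglongrightarrow> 0"
    using tendsto_ennrealI[OF LIMSEQ_divide_realpow_zero[of 2 4]] by simp
  then have "(\<lambda>m. ennreal (4 / 2 ^ m)
      + 4 * indicator_dist A (grid_set (1 / 2 ^ m) (grid_hull (1 / 2 ^ m) A))) \<longlonglongrightarrow> 0 + 4 * 0"
    by (intro tendsto_add ennreal_tendsto_cmult indicator_dist_grid_hull_tendsto assms) auto
  then show ?thesis
    unfolding indicator_dist_def[symmetric]
    by (intro tendsto_sandwich[OF always_eventually bound tendsto_const]) simp_all
qed

end
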